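(* Let $p\in(0,1/2)$ and $x>2$. Let $(\xi_n)_{n\geq1}$ be i.i.d. with $\mathbf{P}(\xi_1=1)=p=1-\mathbf{P}(\xi_1=-1)$. Set $W_0:=x$, $B_1:=1$, $W_n:=W_{n-1}+\xi_nB_n$, $B_{n+1}:=B_n2^{\xi_n}$ for $n\geq1$, and $X_n:=W_n/B_{n+1}-2$ for $n\in\mathbb{N}$. Let $R:=\max\{2,\ \frac{2p}{(1-2p)\log2}+1\}$ and, for $k\geq1$, $T_k:=\#\{1\leq j\leq k: X_j\geq R\}$. There exist positive constants $C$ and $\beta$, independent of $x$, $p$ and $k$, such that for all $k\geq1$, $$\mathbf{P}\left(X_k>0,\ T_k\leq\tfrac{3k}{4}\right)\leq C\left(2^{-\beta p^2k}+2^{\frac{\beta(1-2p)}{\log_2(1-2p)}k}\right).$$ *)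

theory Defs
  imports "HOL-Probability.Probability"
begin

definition xi_dist :: "real \<Rightarrow> real measure" where
  "xi_dist p = measure_pmf (map_pmf (\<lambda>b. if b then 1 else -1) (bernoulli_pmf p))"

text \<open>Canonical probability space of an i.i.d. sequence: the outcome is
  \<omega> :: nat \<Rightarrow> real with \<xi>_n = \<omega> n (for n \<ge> 1; the coordinate 0 is unused).\<close>
definition Omega :: "real \<Rightarrow> (nat \<Rightarrow> real) measure" where
  "Omega p = PiM UNIV (\<lambda>_::nat. xi_dist p)"

text \<open>B_1 = 1, B_{n+1} = B_n 2^{\<xi>_n} for n \<ge> 1 (B_0 is an unused placeholder).\<close>
fun Bn :: "(nat \<Rightarrow> real) \<Rightarrow> nat \<Rightarrow> real" where
  "Bn \<omega> 0 = 1"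
| "Bn \<omega> (Suc n) = (if n = 0 then 1 else Bn \<omega> n * 2 powr (\<omega> n))"

primrec Wn :: "real \<Rightarrow> (nat \<Rightarrow> real) \<Rightarrow> nat \<Rightarrow> real" where
  "Wn x \<omega> 0 = x"
| "Wn x \<omega> (Suc n) = Wn x \<omega> n + \<omega> (Suc n) * Bn \<omega> (Suc n)"

definition Xn :: "real \<Rightarrow> (nat \<Rightarrow> real) \<Rightarrow> nat \<Rightarrow> real" where
  "Xn x \<omega> n = Wn x \<omega> n / Bn \<omega> (Suc n) - 2"

definition Rconst :: "real \<Rightarrow> real" where
  "Rconst p = max 2 (2 * p / ((1 - 2 * p) * ln 2) + 1)"

definition Tk :: "real \<Rightarrow> real \<Rightarrow> (nat \<Rightarrow> real) \<Rightarrow> nat \<Rightarrow> nat" where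
  "Tk p x \<omega> k = card {j \<in> {1..k}. Xn x \<omega> j \<ge> Rconst p}"

end

theory Submission
  imports Defs
begin

(*
  Since W_n = W_(n-1) + xi_n B_n and B_(n+1) = B_n 2^xi_n, the process X_n = W_n / B_(n+1) - 2 moves
  from y to 2 y when xi_(n+1) = -1 and to (y - 1) / 2 when xi_(n+1) = 1.  Measure the size of z > 0
  by its level ceil(log2 (z + 1)) and give level j the weight H j = c (u^(m-1) + ... + u^(m-j)),
  frozen from level m on, where R + 1 <= 2^m.  If c p >= 1 and c (p u - (1 - p)) >= 1, then
  H (level X) drops in expectation by at least 1 at every step taken from below R.  Hence, with
  V = H m and the potential Phi z = 1 + H (level z) / V for z > 0 (and 0 otherwise),
  exp (L / (4 V)) Phi(X) is a supermartingale, where L counts the visits below R; by induction on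
  the number of steps, P(X_k > 0, L_k >= r) <= Phi(X_0) exp (- r / (4 V)).  On the event of the
  theorem L_k >= k/4 - 1, which gives the bound 4 exp (- k / (16 V)).  It remains to choose
  c, u, m according to p: V = O(p^-2) for p <= 2/5, and V = O(1 / (1 - 2 p)) for p near 1/2.
*)

lemma emeasure_PiM_UNIV_split_first:
  assumes M: "prob_space M" and A: "A \<in> sets (PiM UNIV (\<lambda>_::nat. M))"
  shows "emeasure (PiM UNIV (\<lambda>_. M)) A =
    (\<integral>\<^sup>+ s. emeasure (PiM UNIV (\<lambda>_. M)) {\<omega> \<in> space (PiM UNIV (\<lambda>_. M)). case_nat s \<omega> \<in> A} \<partial>M)"
proof -
  interpret sequence_space M
    using M by (simp add: sequence_space_def product_prob_space_def product_prob_space_axioms_def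
        product_sigma_finite_def prob_space_imp_sigma_finite)
  define f :: "'a \<times> (nat \<Rightarrow> 'a) \<Rightarrow> nat \<Rightarrow> 'a" where "f = (\<lambda>(s, \<omega>). case_nat s \<omega>)"
  have f: "f \<in> measurable (M \<Otimes>\<^sub>M S) S"
    unfolding f_def by measurable
  have "emeasure S A = emeasure (distr (M \<Otimes>\<^sub>M S) S f) A"
    unfolding f_def by (simp add: PiM_iter)
  also have "\<dots> = emeasure (M \<Otimes>\<^sub>M S) (f -` A \<inter> space (M \<Otimes>\<^sub>M S))"
    by (rule emeasure_distr[OF f A])
  also have "\<dots> = (\<integral>\<^sup>+ s. emeasure S (Pair s -` (f -` A \<inter> space (M \<Otimes>\<^sub>M S))) \<partial>M)"
    by (rule P.emeasure_pair_measure_alt) (rule measurable_sets[OF f A])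
  also have "\<dots> = (\<integral>\<^sup>+ s. emeasure S {\<omega> \<in> space S. case_nat s \<omega> \<in> A} \<partial>M)"
    by (intro nn_integral_cong arg_cong2[where f=emeasure]) (auto simp: space_pair_measure f_def)
  finally show ?thesis .
qed

lemma card_atLeastAtMost_filter_le:
  "k \<le> card {j \<in> {1..k}. \<not> P j} + card {j \<in> {..<k}. P j} + 1"
proof -
  have "{j \<in> {1..k}. \<not> P j} \<union> {j \<in> {1..k}. P j} = {1..k}"
    by blast
  then have "k = card ({j \<in> {1..k}. \<not> P j} \<union> {j \<in> {1..k}. P j})"
    by simp
  also have "\<dots> \<le> card {j \<in> {1..k}. \<not> P j} + card {j \<in> {1..k}. P j}"
    by (rule card_Un_le)
  also have "card {j \<in> {1..k}. P j} \<le> card (insert k {j \<in> {..<k}. P j})"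
    by (rule card_mono) auto
  also have "\<dots> \<le> card {j \<in> {..<k}. P j} + 1"
    by (simp add: card_insert_if)
  finally show ?thesis
    by simp
qed

lemma exp_quarter_inverse_le:
  fixes V :: real
  assumes "1 \<le> V"
  shows "exp (1 / (4 * V)) \<le> 1 + 1 / (2 * V)"
  using real_exp_bound_lemma[of "1 / (4 * V)"] assms by (simp add: field_simps)

lemma power_of_two_between:
  fixes x :: real
  assumes "1 \<le> x"
  obtains m :: nat where "x \<le> 2 ^ m" "2 ^ m \<le> 2 * x"
proof
  define m where "m = nat \<lceil>log 2 x\<rceil>"
  have "0 \<le> log 2 x"
    using assms by simp
  then have "log 2 x \<le> real m" "real m \<le> log 2 x + 1"
    unfolding m_def by linarith+
  then have "2 powr log 2 x \<le> 2 powr real m" "2 powr real m \<le> 2 powr (log 2 x + 1)"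
    by simp_all
  then show "x \<le> 2 ^ m" "2 ^ m \<le> 2 * x"
    using assms by (simp_all add: powr_realpow powr_add)
qed

section \<open>The probability space\<close>

lemma space_xi_dist [simp]: "space (xi_dist p) = UNIV"
  by (simp add: xi_dist_def)

lemma prob_space_xi_dist: "prob_space (xi_dist p)"
  unfolding xi_dist_def by (rule prob_space_measure_pmf)

lemma nn_integral_xi_dist:
  assumes "0 \<le> p" "p \<le> 1"
  shows "(\<integral>\<^sup>+ s. f s \<partial>xi_dist p) = f 1 * ennreal p + f (-1) * ennreal (1 - p)"
  unfolding xi_dist_def using assms by simp

lemma space_Omega [simp]: "space (Omega p) = UNIV"
  by (simp add: Omega_def space_PiM)

lemma emeasure_Omega_split_first:
  assumes "A \<in> sets (Omega p)"
  shows "emeasure (Omega p) A = (\<integral>\<^sup>+ s. emeasure (Omega p) {\<omega>. case_nat s \<omega> \<in> A} \<partial>xi_dist p)"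
  using emeasure_PiM_UNIV_split_first[OF prob_space_xi_dist, of A p] assms
  unfolding Omega_def[symmetric] by simp

lemma measurable_Omega_coordinate [measurable]: "(\<lambda>\<omega>. \<omega> i) \<in> borel_measurable (Omega p)"
  unfolding Omega_def
  by (rule measurable_compose[OF measurable_component_singleton]) (auto simp: xi_dist_def)

lemma measurable_Omega_shift: "(\<lambda>\<omega> i. \<omega> (Suc i)) \<in> measurable (Omega p) (Omega p)"
  unfolding Omega_def
  by (rule measurable_PiM_single'[where f="\<lambda>i \<omega>. \<omega> (Suc i)"])
     (auto simp: space_PiM intro!: measurable_component_singleton)

lemma prob_space_Omega: "prob_space (Omega p)"
  unfolding Omega_def by (rule prob_space_PiM) (rule prob_space_xi_dist)

lemma sets_Omega_shift_vimage:
  "A \<in> sets (Omega p) \<Longrightarrow> {\<omega>. (\<lambda>i. \<omega> (Suc i)) \<in> A} \<in> sets (Omega p)"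
  using measurable_sets[OF measurable_Omega_shift] by (simp add: vimage_def)

lemma emeasure_Omega_shift_vimage:
  assumes "A \<in> sets (Omega p)"
  shows "emeasure (Omega p) {\<omega>. (\<lambda>i. \<omega> (Suc i)) \<in> A} = emeasure (Omega p) A"
proof -
  have "emeasure (Omega p) {\<omega>. (\<lambda>i. \<omega> (Suc i)) \<in> A}
      = (\<integral>\<^sup>+ s. emeasure (Omega p) {\<omega>. (\<lambda>i. case_nat s \<omega> (Suc i)) \<in> A} \<partial>xi_dist p)"
    using sets_Omega_shift_vimage[OF assms] by (simp add: emeasure_Omega_split_first)
  also have "\<dots> = emeasure (Omega p) A"
    using prob_space.emeasure_space_1[OF prob_space_xi_dist, of p] by simp
  finally show ?thesis .
qed

section \<open>The chain\<close>

definition X_step :: "real \<Rightarrow> real \<Rightarrow> real" where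
  "X_step y s = (y + 2 + s) / 2 powr s - 2"

lemma X_step_one [simp]: "X_step y 1 = (y - 1) / 2"
  by (simp add: X_step_def field_simps)

lemma X_step_minus_one [simp]: "X_step y (-1) = 2 * y"
  by (simp add: X_step_def powr_minus field_simps)

lemma Bn_pos: "Bn \<omega> n > 0"
  by (induction n) auto

lemma Xn_Suc: "Xn x \<omega> (Suc n) = X_step (Xn x \<omega> n) (\<omega> (Suc n))"
  unfolding Xn_def X_step_def using Bn_pos[of \<omega> "Suc n"] by (simp add: field_simps)

primrec X_path :: "real \<Rightarrow> (nat \<Rightarrow> real) \<Rightarrow> nat \<Rightarrow> real" where
  "X_path y \<omega> 0 = y"
| "X_path y \<omega> (Suc n) = X_step (X_path y \<omega> n) (\<omega> n)"

lemma Xn_eq_X_path: "Xn x \<omega> n = X_path (x - 2) (\<lambda>i. \<omega> (Suc i)) n"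
  by (induction n) (simp add: Xn_def, simp add: Xn_Suc)

lemma X_path_case_nat: "X_path y (case_nat s \<omega>) (Suc n) = X_path (X_step y s) \<omega> n"
  by (induction n) auto

definition low_visits :: "real \<Rightarrow> real \<Rightarrow> (nat \<Rightarrow> real) \<Rightarrow> nat \<Rightarrow> real" where
  "low_visits R y \<omega> n = (\<Sum>j<n. of_bool (X_path y \<omega> j < R))"

lemma low_visits_case_nat:
  "low_visits R y (case_nat s \<omega>) (Suc n) = of_bool (y < R) + low_visits R (X_step y s) \<omega> n"
  unfolding low_visits_def
  by (subst sum.lessThan_Suc_shift) (simp add: X_path_case_nat del: X_path.simps(2))

lemma low_visits_eq_card: "low_visits R y \<omega> n = real (card {j \<in> {..<n}. X_path y \<omega> j < R})"
  unfolding low_visits_def by (simp add: sum_of_bool_eq Int_def)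

lemma measurable_X_step [measurable]:
  assumes [measurable]: "f \<in> borel_measurable M" "g \<in> borel_measurable M"
  shows "(\<lambda>x. X_step (f x) (g x)) \<in> borel_measurable M"
  unfolding X_step_def by measurable

lemma measurable_X_path [measurable]: "(\<lambda>\<omega>. X_path y \<omega> n) \<in> borel_measurable (Omega p)"
  by (induction n) simp_all

lemma measurable_low_visits [measurable]: "(\<lambda>\<omega>. low_visits R y \<omega> n) \<in> borel_measurable (Omega p)"
  unfolding low_visits_def by measurable

lemma sets_X_path_low_visits:
  "{\<omega>. 0 < X_path y \<omega> n \<and> r \<le> low_visits R y \<omega> n} \<in> sets (Omega p)"
proof -
  have "Measurable.pred (Omega p) (\<lambda>\<omega>. 0 < X_path y \<omega> n \<and> r \<le> low_visits R y \<omega> n)"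
    by measurable
  then show ?thesis
    unfolding pred_def by simp
qed

lemma few_high_visits_subset_shift:
  "{\<omega> \<in> space (Omega p). 0 < Xn x \<omega> k \<and> real (card {j \<in> {1..k}. R \<le> Xn x \<omega> j}) \<le> 3 * real k / 4}
    \<subseteq> {\<omega>. (\<lambda>i. \<omega> (Suc i)) \<in> {\<omega>. 0 < X_path (x - 2) \<omega> k \<and> real k / 4 - 1 \<le> low_visits R (x - 2) \<omega> k}}"
proof safe
  fix \<omega>
  assume "0 < Xn x \<omega> k" and "real (card {j \<in> {1..k}. R \<le> Xn x \<omega> j}) \<le> 3 * real k / 4"
  moreover have "real k \<le> real (card {j \<in> {1..k}. R \<le> Xn x \<omega> j}) + low_visits R (x - 2) (\<lambda>i. \<omega> (Suc i)) k + 1"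
    using card_atLeastAtMost_filter_le[of k "\<lambda>j. X_path (x - 2) (\<lambda>i. \<omega> (Suc i)) j < R"]
    by (simp add: Xn_eq_X_path low_visits_eq_card not_less)
  ultimately show "0 < X_path (x - 2) (\<lambda>i. \<omega> (Suc i)) k"
    and "real k / 4 - 1 \<le> low_visits R (x - 2) (\<lambda>i. \<omega> (Suc i)) k"
    by (simp_all add: Xn_eq_X_path)
qed

section \<open>Levels and weights\<close>

definition level :: "real \<Rightarrow> nat" where
  "level z = nat \<lceil>log 2 (z + 1)\<rceil>"

lemma level_pos: assumes "0 < z" shows "1 \<le> level z"
proof -
  have "0 < log 2 (z + 1)"
    using assms by simp
  then show ?thesis
    unfolding level_def by linarith
qed

lemma level_le: assumes "0 < z" "z + 1 \<le> 2 ^ m" shows "level z \<le> m"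
proof -
  have "log 2 (z + 1) \<le> log 2 (2 ^ m)"
    using assms by (subst log_le_cancel_iff) auto
  then show ?thesis
    unfolding level_def by (simp add: log_nat_power ceiling_le_iff nat_le_iff)
qed

lemma level_double_le: assumes "0 < z" shows "level (2 * z) \<le> Suc (level z)"
proof -
  have "log 2 (2 * z + 1) \<le> log 2 (2 * (z + 1))"
    using assms by simp
  also have "\<dots> = log 2 (z + 1) + 1"
    using assms log_mult_pos[of 2 "z + 1" 2] by simp
  finally have "nat \<lceil>log 2 (2 * z + 1)\<rceil> \<le> nat (\<lceil>log 2 (z + 1)\<rceil> + 1)"
    by (metis ceiling_add_one ceiling_mono nat_mono)
  moreover have "0 < \<lceil>log 2 (z + 1)\<rceil>"
    using assms by simp
  ultimately show ?thesis
    unfolding level_def by (simp add: nat_add_distrib)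
qed

lemma level_half_pred: assumes "1 < z" shows "level ((z - 1) / 2) = level z - 1"
proof -
  have "log 2 ((z - 1) / 2 + 1) = log 2 ((z + 1) / 2)"
    by (simp add: field_simps)
  also have "\<dots> = log 2 (z + 1) - 1"
    using assms by (simp add: log_divide)
  finally have "\<lceil>log 2 ((z - 1) / 2 + 1)\<rceil> = \<lceil>log 2 (z + 1)\<rceil> - 1"
    by simp
  then show ?thesis
    unfolding level_def by (simp add: nat_diff_distrib)
qed

definition weight :: "real \<Rightarrow> real \<Rightarrow> nat \<Rightarrow> nat \<Rightarrow> real" where
  "weight c u m j = c * (\<Sum>i<min j m. u ^ (m - Suc i))"

lemma weight_0 [simp]: "weight c u m 0 = 0"
  by (simp add: weight_def)

lemma weight_Suc: "j < m \<Longrightarrow> weight c u m (Suc j) = weight c u m j + c * u ^ (m - Suc j)"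
  by (simp add: weight_def algebra_simps)

lemma weight_eq_total: "m \<le> j \<Longrightarrow> weight c u m j = weight c u m m"
  by (simp add: weight_def)

lemma weight_nonneg: "0 \<le> c \<Longrightarrow> 0 \<le> u \<Longrightarrow> 0 \<le> weight c u m j"
  by (simp add: weight_def sum_nonneg)

lemma weight_mono:
  assumes "0 \<le> c" "0 \<le> u" "j \<le> j'"
  shows "weight c u m j \<le> weight c u m j'"
  unfolding weight_def using assms
  by (intro mult_left_mono sum_mono2) auto

lemma weight_le_total: "0 \<le> c \<Longrightarrow> 0 \<le> u \<Longrightarrow> weight c u m j \<le> weight c u m m"
  using weight_mono[of c u j m m] weight_eq_total[of m j c u] by (cases "j \<le> m") auto

(* Below level m a step up adds c w and a step down removes c u w, where w = u^(m-1-j), so the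
   second condition on c pays for the visit; at level m a step up adds nothing and c p >= 1 pays. *)
lemma weight_drift:
  assumes p: "0 < p" "p < 1" and c_p: "1 \<le> c * p" and c_u: "1 \<le> c * (p * u - (1 - p))"
    and u: "1 \<le> u" and j: "1 \<le> j"
  shows "of_bool (j \<le> m) + (1 - p) * weight c u m (Suc j) + p * weight c u m (j - 1)
    \<le> weight c u m j"
proof -
  consider "m < j" | "j = m" | "j < m" by linarith
  then show ?thesis
  proof cases
    case 1
    then have "weight c u m (Suc j) = weight c u m m" "weight c u m (j - 1) = weight c u m m"
      "weight c u m j = weight c u m m"
      using weight_eq_total[of m "Suc j"] weight_eq_total[of m "j - 1"] weight_eq_total[of m j]
      by simp_all
    then show ?thesis
      using 1 by (simp add: algebra_simps)
  next
    case 2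
    have "weight c u m (Suc j) = weight c u m j"
      using 2 weight_eq_total[of m "Suc j"] by simp
    moreover have "weight c u m j = weight c u m (j - 1) + c"
      using 2 j weight_Suc[of "j - 1" m c u] by simp
    ultimately show ?thesis
      using 2 c_p by (simp add: algebra_simps)
  next
    case 3
    define w where "w = u ^ (m - Suc j)"
    have "1 \<le> w"
      unfolding w_def using u by simp
    then have "1 * 1 \<le> w * (c * (p * u - (1 - p)))"
      using c_u by (intro mult_mono) auto
    moreover have "weight c u m (Suc j) = weight c u m j + c * w"
      using 3 by (simp add: weight_Suc w_def)
    moreover have "weight c u m j = weight c u m (j - 1) + c * (u * w)"
    proof -
      have "m - Suc (j - 1) = Suc (m - Suc j)"
        using 3 j by simp
      then show ?thesis
        using 3 j weight_Suc[of "j - 1" m c u] by (simp add: w_def)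
    qed
    ultimately show ?thesis
      using 3 by (simp add: algebra_simps)
  qed
qed

section \<open>The potential\<close>

locale drift_params =
  fixes p c u R :: real and m :: nat
  assumes p_pos: "0 < p" and p_less_1: "p < 1"
    and c_p: "1 \<le> c * p" and c_u: "1 \<le> c * (p * u - (1 - p))"
    and u_ge_1: "1 \<le> u" and R_le: "R + 1 \<le> 2 ^ m" and m_pos: "1 \<le> m"
begin

abbreviation H :: "nat \<Rightarrow> real" where
  "H \<equiv> weight c u m"

lemma c_ge_1: "1 \<le> c"
proof -
  have "0 < c * p"
    using c_p by linarith
  then have "0 < c"
    using p_pos by (simp add: zero_less_mult_iff)
  then have "c * p \<le> c"
    using p_less_1 by (simp add: mult_left_le)
  then show ?thesis
    using c_p by simp
qed

lemma H_nonneg: "0 \<le> H j"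
  using c_ge_1 u_ge_1 by (simp add: weight_nonneg)

lemma H_le_total: "H j \<le> H m"
  using c_ge_1 u_ge_1 by (simp add: weight_le_total)

lemma total_weight_ge_1: "1 \<le> H m"
proof -
  have "1 * 1 \<le> c * u ^ (m - 1)"
    using c_ge_1 u_ge_1 by (intro mult_mono) simp_all
  also have "\<dots> = H 1"
    using m_pos weight_Suc[of 0 m c u] by simp
  also have "\<dots> \<le> H m"
    using c_ge_1 u_ge_1 m_pos by (simp add: weight_mono)
  finally show ?thesis
    by simp
qed

lemma weight_level_drift:
  assumes z: "0 < z"
  shows "of_bool (z < R) + (1 - p) * H (level (2 * z))
    + p * (if 0 < (z - 1) / 2 then H (level ((z - 1) / 2)) else 0) \<le> H (level z)"
proof -
  have "of_bool (z < R) \<le> (of_bool (level z \<le> m) :: real)"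
    using level_le[OF z, of m] R_le by auto
  moreover have "H (level (2 * z)) \<le> H (Suc (level z))"
    using c_ge_1 u_ge_1 level_double_le[OF z] by (simp add: weight_mono)
  moreover have "(if 0 < (z - 1) / 2 then H (level ((z - 1) / 2)) else 0) \<le> H (level z - 1)"
    using level_half_pred[of z] H_nonneg by auto
  ultimately have "of_bool (z < R) + (1 - p) * H (level (2 * z))
      + p * (if 0 < (z - 1) / 2 then H (level ((z - 1) / 2)) else 0)
    \<le> of_bool (level z \<le> m) + (1 - p) * H (Suc (level z)) + p * H (level z - 1)"
    using p_pos p_less_1 by (intro add_mono mult_left_mono) auto
  also have "\<dots> \<le> H (level z)"
    using weight_drift[OF p_pos p_less_1 c_p c_u u_ge_1 level_pos[OF z]] .
  finally show ?thesis .
qed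

definition potential :: "real \<Rightarrow> real" where
  "potential z = (if 0 < z then 1 + H (level z) / H m else 0)"

lemma potential_nonneg: "0 \<le> potential z"
  unfolding potential_def using total_weight_ge_1 H_nonneg by simp

lemma one_le_potential: "0 < z \<Longrightarrow> 1 \<le> potential z"
  unfolding potential_def using total_weight_ge_1 H_nonneg by simp

lemma potential_le_2: "potential z \<le> 2"
  unfolding potential_def using total_weight_ge_1 H_le_total by simp

lemma potential_mean_le:
  assumes y: "0 < y"
  shows "p * potential ((y - 1) / 2) + (1 - p) * potential (2 * y) \<le> potential y - of_bool (y < R) / H m"
proof -
  define V where "V = H m"
  define D where "D = (if 0 < (y - 1) / 2 then H (level ((y - 1) / 2)) else 0)"
  define U where "U = H (level (2 * y))"
  have V: "1 \<le> V"
    unfolding V_def by (rule total_weight_ge_1)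
  have "potential ((y - 1) / 2) \<le> 1 + D / V"
    unfolding potential_def D_def V_def using total_weight_ge_1 H_nonneg by simp
  moreover have "potential (2 * y) = 1 + U / V"
    unfolding potential_def U_def V_def using y by simp
  ultimately have "p * potential ((y - 1) / 2) + (1 - p) * potential (2 * y)
      \<le> p * (1 + D / V) + (1 - p) * (1 + U / V)"
    using p_pos p_less_1 by (intro add_mono mult_left_mono) auto
  also have "\<dots> = 1 + (p * D + (1 - p) * U) / V"
    using V by (simp add: field_simps)
  also have "\<dots> \<le> 1 + (H (level y) - of_bool (y < R)) / V"
    using weight_level_drift[OF y] V unfolding D_def U_def by (simp add: divide_right_mono)
  also have "\<dots> = potential y - of_bool (y < R) / V"
    unfolding potential_def V_def using y by (simp add: diff_divide_distrib)
  finally show ?thesis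
    unfolding V_def .
qed

lemma potential_drift:
  assumes y: "0 < y"
  shows "exp (of_bool (y < R) / (4 * H m)) * (p * potential ((y - 1) / 2) + (1 - p) * potential (2 * y))
    \<le> potential y"
proof (cases "y < R")
  case True
  define V where "V = H m"
  have V: "1 \<le> V"
    unfolding V_def by (rule total_weight_ge_1)
  have "1 / V \<le> 1"
    using V by simp
  then have "0 \<le> potential y - 1 / V"
    using one_le_potential[OF y] by linarith
  have "exp (1 / (4 * V)) * (p * potential ((y - 1) / 2) + (1 - p) * potential (2 * y))
      \<le> exp (1 / (4 * V)) * (potential y - 1 / V)"
    using potential_mean_le[OF y] True unfolding V_def by (intro mult_left_mono) simp_all
  also have "\<dots> \<le> (1 + 1 / (2 * V)) * (potential y - 1 / V)"
    by (rule mult_right_mono[OF exp_quarter_inverse_le[OF V] \<open>0 \<le> potential y - 1 / V\<close>])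
  also have "\<dots> = potential y - (1 / V - potential y / (2 * V)) - 1 / (2 * V * V)"
    using V by (simp add: field_simps)
  also have "\<dots> \<le> potential y"
  proof -
    have "potential y / (2 * V) \<le> 2 / (2 * V)"
      using potential_le_2[of y] V by (intro divide_right_mono) auto
    moreover have "2 / (2 * V) = 1 / V" "0 \<le> 1 / (2 * V * V)"
      using V by simp_all
    ultimately show ?thesis
      by linarith
  qed
  finally show ?thesis
    using True unfolding V_def by simp
next
  case False
  then show ?thesis
    using potential_mean_le[OF y] by simp
qed

definition tail_bound :: "real \<Rightarrow> real \<Rightarrow> real" where
  "tail_bound y r = potential y * exp (- r / (4 * H m))"

lemma tail_bound_nonneg: "0 \<le> tail_bound y r"
  unfolding tail_bound_def using potential_nonneg by simp

lemma tail_bound_drift: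
  "p * tail_bound ((y - 1) / 2) (r - of_bool (y < R)) + (1 - p) * tail_bound (2 * y) (r - of_bool (y < R))
    \<le> tail_bound y r"
proof (cases "0 < y")
  case True
  have "exp (- (r - of_bool (y < R)) / (4 * H m)) = exp (- r / (4 * H m)) * exp (of_bool (y < R) / (4 * H m))"
    by (simp add: diff_divide_distrib flip: exp_add)
  then have "p * tail_bound ((y - 1) / 2) (r - of_bool (y < R)) + (1 - p) * tail_bound (2 * y) (r - of_bool (y < R))
      = exp (- r / (4 * H m)) * (exp (of_bool (y < R) / (4 * H m))
          * (p * potential ((y - 1) / 2) + (1 - p) * potential (2 * y)))"
    unfolding tail_bound_def by (simp add: algebra_simps)
  also have "\<dots> \<le> exp (- r / (4 * H m)) * potential y"
    using potential_drift[OF True] by (intro mult_left_mono) auto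
  finally show ?thesis
    unfolding tail_bound_def by (simp add: mult.commute)
next
  case False
  then show ?thesis
    unfolding tail_bound_def potential_def by simp
qed

lemma emeasure_low_visits_le:
  "emeasure (Omega p) {\<omega>. 0 < X_path y \<omega> n \<and> r \<le> low_visits R y \<omega> n} \<le> ennreal (tail_bound y r)"
proof (induction n arbitrary: y r)
  case 0
  show ?case
  proof (cases "0 < y \<and> r \<le> 0")
    case True
    then have "{\<omega>. 0 < X_path y \<omega> 0 \<and> r \<le> low_visits R y \<omega> 0} = space (Omega p)"
      by (simp add: low_visits_def)
    moreover have "1 * 1 \<le> potential y * exp (- r / (4 * H m))"
      using True one_le_potential[of y] total_weight_ge_1
      by (intro mult_mono) (simp_all add: divide_nonpos_pos)
    ultimately show ?thesis
      using prob_space.emeasure_space_1[OF prob_space_Omega, of p] by (simp add: tail_bound_def)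
  next
    case False
    then have "{\<omega>. 0 < X_path y \<omega> 0 \<and> r \<le> low_visits R y \<omega> 0} = {}"
      by (auto simp: low_visits_def)
    then show ?thesis
      by (metis emeasure_empty zero_le)
  qed
next
  case (Suc n)
  define b :: real where "b = of_bool (y < R)"
  define A where "A = {\<omega>. 0 < X_path y \<omega> (Suc n) \<and> r \<le> low_visits R y \<omega> (Suc n)}"
  have "A \<in> sets (Omega p)"
    unfolding A_def by (rule sets_X_path_low_visits)
  have shift: "{\<omega>. case_nat s \<omega> \<in> A}
      = {\<omega>. 0 < X_path (X_step y s) \<omega> n \<and> r - b \<le> low_visits R (X_step y s) \<omega> n}" for s
    unfolding A_def b_def by (auto simp: X_path_case_nat low_visits_case_nat simp del: X_path.simps(2))
  have "emeasure (Omega p) A = (\<integral>\<^sup>+ s. emeasure (Omega p) {\<omega>. case_nat s \<omega> \<in> A} \<partial>xi_dist p)"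
    by (rule emeasure_Omega_split_first[OF \<open>A \<in> sets (Omega p)\<close>])
  also have "\<dots> = emeasure (Omega p) {\<omega>. 0 < X_path ((y - 1) / 2) \<omega> n \<and> r - b \<le> low_visits R ((y - 1) / 2) \<omega> n} * ennreal p
      + emeasure (Omega p) {\<omega>. 0 < X_path (2 * y) \<omega> n \<and> r - b \<le> low_visits R (2 * y) \<omega> n} * ennreal (1 - p)"
    unfolding shift using p_pos p_less_1 by (subst nn_integral_xi_dist) auto
  also have "\<dots> \<le> ennreal (tail_bound ((y - 1) / 2) (r - b)) * ennreal p
      + ennreal (tail_bound (2 * y) (r - b)) * ennreal (1 - p)"
    by (intro add_mono mult_right_mono Suc.IH) simp_all
  also have "\<dots> = ennreal (p * tail_bound ((y - 1) / 2) (r - b) + (1 - p) * tail_bound (2 * y) (r - b))"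
    using p_pos p_less_1 tail_bound_nonneg
    by (subst ennreal_plus) (simp_all add: ennreal_mult' mult.commute)
  also have "\<dots> \<le> ennreal (tail_bound y r)"
    using tail_bound_drift[of y r] unfolding b_def by (rule ennreal_leI)
  finally show ?case
    unfolding A_def .
qed

lemma measure_Xn_few_high_visits_le:
  "measure (Omega p) {\<omega> \<in> space (Omega p). 0 < Xn x \<omega> k \<and> real (card {j \<in> {1..k}. R \<le> Xn x \<omega> j}) \<le> 3 * real k / 4}
    \<le> 4 * exp (- real k / (16 * H m))"
proof -
  define A where "A = {\<omega>. 0 < X_path (x - 2) \<omega> k \<and> real k / 4 - 1 \<le> low_visits R (x - 2) \<omega> k}"
  have "A \<in> sets (Omega p)"
    unfolding A_def by (rule sets_X_path_low_visits)
  have "{\<omega> \<in> space (Omega p). 0 < Xn x \<omega> k \<and> real (card {j \<in> {1..k}. R \<le> Xn x \<omega> j}) \<le> 3 * real k / 4}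
      \<subseteq> {\<omega>. (\<lambda>i. \<omega> (Suc i)) \<in> A}"
    unfolding A_def by (rule few_high_visits_subset_shift)
  then have "measure (Omega p) {\<omega> \<in> space (Omega p). 0 < Xn x \<omega> k \<and> real (card {j \<in> {1..k}. R \<le> Xn x \<omega> j}) \<le> 3 * real k / 4}
      \<le> measure (Omega p) {\<omega>. (\<lambda>i. \<omega> (Suc i)) \<in> A}"
    using sets_Omega_shift_vimage[OF \<open>A \<in> sets (Omega p)\<close>]
    by (intro finite_measure.finite_measure_mono[OF prob_space.finite_measure[OF prob_space_Omega]])
  also have "\<dots> = measure (Omega p) A"
    unfolding measure_def using emeasure_Omega_shift_vimage[OF \<open>A \<in> sets (Omega p)\<close>] by simp
  also have "\<dots> \<le> tail_bound (x - 2) (real k / 4 - 1)"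
    using emeasure_low_visits_le[of "x - 2" k "real k / 4 - 1"] tail_bound_nonneg
    unfolding A_def measure_def by (simp add: enn2real_leI)
  also have "\<dots> \<le> 2 * exp (- (real k / 4 - 1) / (4 * H m))"
    unfolding tail_bound_def using potential_le_2 by (intro mult_right_mono) auto
  also have "\<dots> = 2 * exp (1 / (4 * H m)) * exp (- real k / (16 * H m))"
    using total_weight_ge_1 by (simp add: field_simps flip: exp_add)
  also have "\<dots> \<le> 4 * exp (- real k / (16 * H m))"
  proof -
    have "1 / (2 * H m) \<le> 1"
      using total_weight_ge_1 by simp
    then have "exp (1 / (4 * H m)) \<le> 2"
      using exp_quarter_inverse_le[OF total_weight_ge_1] by linarith
    then show ?thesis
      by simp
  qed
  finally show ?thesis .
qed

end

section \<open>Choice of the parameters\<close>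

lemma two_le_Rconst: "2 \<le> Rconst p"
  by (simp add: Rconst_def)

lemma Rconst_le:
  assumes "0 < p" "p < 1/2"
  shows "Rconst p \<le> max 2 (3 * p / (1 - 2 * p) + 1)"
proof -
  have "2 * p / ((1 - 2 * p) * ln 2) \<le> 2 * p / ((1 - 2 * p) * (2 / 3))"
    using assms ln2_ge_two_thirds by (intro divide_left_mono mult_left_mono) auto
  also have "\<dots> = 3 * p / (1 - 2 * p)"
    using assms by (simp add: field_simps)
  finally show ?thesis
    unfolding Rconst_def by (intro max.mono) simp_all
qed

abbreviation prob_few_high_visits :: "real \<Rightarrow> real \<Rightarrow> nat \<Rightarrow> real" where
  "prob_few_high_visits p x k \<equiv>
    measure (Omega p) {\<omega> \<in> space (Omega p). Xn x \<omega> k > 0 \<and> real (Tk p x \<omega> k) \<le> 3 * real k / 4}"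

lemma prob_few_high_visits_le_powr:
  assumes "drift_params p c u (Rconst p) m" and rate: "- e * ln 2 \<le> 1 / (16 * weight c u m m)"
  shows "prob_few_high_visits p x k \<le> 4 * 2 powr (e * real k)"
proof -
  have "real k * (- e * ln 2) \<le> real k * (1 / (16 * weight c u m m))"
    using rate by (rule mult_left_mono) simp
  then have "exp (- real k / (16 * weight c u m m)) \<le> 2 powr (e * real k)"
    by (simp add: powr_def mult_ac)
  then show ?thesis
    using drift_params.measure_Xn_few_high_visits_le[OF assms(1), of x k] unfolding Tk_def by simp
qed

lemma prob_few_high_visits_small_p:
  assumes p: "0 < p" "p \<le> 1/5"
  shows "prob_few_high_visits p x k \<le> 4 * 2 powr (- (1/4000) * p\<^sup>2 * real k)"
proof (rule prob_few_high_visits_le_powr)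
  have "3 * p / (1 - 2 * p) \<le> 1"
    using p by (simp add: field_simps)
  then have "Rconst p + 1 \<le> 2 ^ 2"
    using Rconst_le[of p] p by simp
  then show "drift_params p (1 / p) (2 / p) (Rconst p) 2"
    using p by unfold_locales (simp_all add: field_simps)
  have V: "weight (1 / p) (2 / p) 2 2 = (2 / p + 1) / p"
    by (simp add: weight_def numeral_2_eq_2)
  have "(2 / p + 1) / p \<le> 3 / p\<^sup>2" "0 < (2 / p + 1) / p"
    using p by (simp_all add: field_simps power2_eq_square)
  then have rate: "p\<^sup>2 / 48 \<le> 1 / (16 * weight (1 / p) (2 / p) 2 2)"
    unfolding V using p by (simp add: field_simps)
  have "ln 2 * p\<^sup>2 \<le> p\<^sup>2"
    using ln_2_less_1 by (intro mult_left_le_one_le) auto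
  have "- (- (1 / 4000) * p\<^sup>2) * ln 2 = ln 2 * p\<^sup>2 / 4000"
    by simp
  also have "\<dots> \<le> p\<^sup>2 / 48"
    using \<open>ln 2 * p\<^sup>2 \<le> p\<^sup>2\<close> zero_le_power2[of p] by linarith
  finally show "- (- (1 / 4000) * p\<^sup>2) * ln 2 \<le> 1 / (16 * weight (1 / p) (2 / p) 2 2)"
    using rate by linarith
qed

lemma prob_few_high_visits_medium_p:
  assumes p: "1/5 < p" "p \<le> 2/5"
  shows "prob_few_high_visits p x k \<le> 4 * 2 powr (- (1/4000) * p\<^sup>2 * real k)"
proof (rule prob_few_high_visits_le_powr)
  have "3 * p / (1 - 2 * p) \<le> 6"
    using p by (simp add: field_simps)
  then have "Rconst p + 1 \<le> 2 ^ 3"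
    using Rconst_le[of p] p by simp
  then show "drift_params p 5 5 (Rconst p) 3"
    using p by unfold_locales simp_all
  have "weight 5 5 3 3 = (155::real)"
    by (simp add: weight_def eval_nat_numeral)
  have "p\<^sup>2 \<le> (2/5)\<^sup>2"
    using p by (intro power_mono) auto
  then have "- (- (1 / 4000) * p\<^sup>2) * ln 2 \<le> (2/5)\<^sup>2 / 4000 * 1"
    using ln_2_less_1 by (intro mult_mono) auto
  then show "- (- (1 / 4000) * p\<^sup>2) * ln 2 \<le> 1 / (16 * weight 5 5 3 3)"
    unfolding \<open>weight 5 5 3 3 = 155\<close> by (simp add: power2_eq_square)
qed

lemma minus_div_log2_mult_ln2_le:
  fixes d :: real
  assumes "0 < d" "d < 1/5"
  shows "- (d / log 2 d) * ln 2 \<le> 5 / 4 * d"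
proof -
  have "ln d \<le> - (4/5)"
    using ln_le_minus_one[of d] assms by simp
  have "d * (ln 2)\<^sup>2 \<le> d"
    using assms ln_2_less_1 ln2_ge_two_thirds by (simp add: mult_left_le power_le_one)
  have "- (d / log 2 d) * ln 2 = d * (ln 2)\<^sup>2 / - ln d"
    using \<open>ln d \<le> - (4/5)\<close> by (simp add: log_def power2_eq_square)
  also have "\<dots> \<le> d / (4/5)"
    using \<open>d * (ln 2)\<^sup>2 \<le> d\<close> assms \<open>ln d \<le> - (4/5)\<close> by (intro frac_le) simp_all
  finally show ?thesis
    by simp
qed

lemma drift_params_large_p:
  assumes p: "2/5 < p" "p < 1/2"
  obtains m where "drift_params p 5 2 (Rconst p) m" "weight 5 2 m m \<le> 21 / (1 - 2 * p)"
proof -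
  define d where "d = 1 - 2 * p"
  have d: "0 < d" "d < 1/5"
    using p unfolding d_def by auto
  have "Rconst p \<le> 3 / (2 * d) + 2"
    using Rconst_le[OF _ p(2)] p d unfolding d_def by (auto simp: field_simps)
  also have "\<dots> \<le> 21 / (10 * d) - 1"
    using d by (simp add: field_simps)
  finally have R: "Rconst p + 1 \<le> 21 / (10 * d)"
    by simp
  obtain m where m: "Rconst p + 1 \<le> 2 ^ m" "2 ^ m \<le> 2 * (Rconst p + 1)"
    using power_of_two_between[of "Rconst p + 1"] two_le_Rconst[of p] by auto
  have "1 \<le> m"
    using m(1) two_le_Rconst[of p] by (cases m) auto
  have "drift_params p 5 2 (Rconst p) m"
    using p m(1) \<open>1 \<le> m\<close> by unfold_locales simp_all
  moreover have "weight 5 2 m m = 5 * (2 ^ m - 1)"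
    by (simp add: weight_def sum.nat_diff_reindex sum_gp_strict)
  then have "weight 5 2 m m \<le> 21 / d"
    using m(2) R by simp
  ultimately show ?thesis
    using that unfolding d_def by blast
qed

lemma prob_few_high_visits_large_p:
  assumes p: "2/5 < p" "p < 1/2"
  shows "prob_few_high_visits p x k \<le> 4 * 2 powr ((1/4000) * (1 - 2 * p) / log 2 (1 - 2 * p) * real k)"
proof -
  define d where "d = 1 - 2 * p"
  have d: "0 < d" "d < 1/5"
    using p unfolding d_def by auto
  obtain m where m: "drift_params p 5 2 (Rconst p) m" "weight 5 2 m m \<le> 21 / d"
    using drift_params_large_p[OF p] unfolding d_def by blast
  have "0 < weight 5 2 m m"
    using drift_params.total_weight_ge_1[OF m(1)] by simp
  have "- ((1/4000) * d / log 2 d) * ln 2 = 1/4000 * (- (d / log 2 d) * ln 2)"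
    by simp
  also have "\<dots> \<le> 1/4000 * (5 / 4 * d)"
    by (rule mult_left_mono[OF minus_div_log2_mult_ln2_le[OF d]]) simp
  also have "\<dots> \<le> 1 / (16 * weight 5 2 m m)"
    using m(2) d \<open>0 < weight 5 2 m m\<close> by (simp add: field_simps)
  finally have "- ((1/4000) * d / log 2 d) * ln 2 \<le> 1 / (16 * weight 5 2 m m)" .
  from prob_few_high_visits_le_powr[OF m(1) this]
  show ?thesis
    unfolding d_def .
qed

lemma prob_few_high_visits_le:
  assumes "0 < p" "p < 1/2"
  shows "prob_few_high_visits p x k
    \<le> 4 * (2 powr (- (1/4000) * p\<^sup>2 * real k) + 2 powr ((1/4000) * (1 - 2 * p) / log 2 (1 - 2 * p) * real k))"
proof -
  let ?T1 = "2 powr (- (1/4000) * p\<^sup>2 * real k)"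
  let ?T2 = "2 powr ((1/4000) * (1 - 2 * p) / log 2 (1 - 2 * p) * real k)"
  consider "p \<le> 1/5" | "1/5 < p" "p \<le> 2/5" | "2/5 < p"
    by linarith
  then have "prob_few_high_visits p x k \<le> 4 * ?T1 \<or> prob_few_high_visits p x k \<le> 4 * ?T2"
    by cases (use assms prob_few_high_visits_small_p prob_few_high_visits_medium_p
        prob_few_high_visits_large_p in blast)+
  moreover have "4 * ?T1 \<le> 4 * (?T1 + ?T2)" "4 * ?T2 \<le> 4 * (?T1 + ?T2)"
    by simp_all
  ultimately show ?thesis
    by (meson order_trans)
qed

theorem lemma3p3:
  shows "\<exists>C > 0. \<exists>\<beta> > 0. \<forall>(p::real) (x::real) (k::nat).
     0 < p \<and> p < 1/2 \<and> x > 2 \<and> k \<ge> 1 \<longrightarrow>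
     measure (Omega p) {\<omega> \<in> space (Omega p). Xn x \<omega> k > 0 \<and> real (Tk p x \<omega> k) \<le> 3 * real k / 4}
       \<le> C * (2 powr (- \<beta> * p\<^sup>2 * real k)
              + 2 powr (\<beta> * (1 - 2 * p) / log 2 (1 - 2 * p) * real k))"
  \<comment> \<open>The bound holds for every starting point x and every k.\<close>
  using prob_few_high_visits_le by (intro exI[of _ "4::real"] exI[of _ "1/4000::real"] conjI allI impI)
    simp_all

end
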